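(* Let $k\ge2$ and let $G=F_k$ be the free group of rank $k$, presented as $G=\langle S_{2k}\mid K\rangle$ with $S_{2k}=\{s_1,\dots,s_{2k}\}$ and $K(s_i,s_j)=0$ if and only if $|i-j|=k$. Let $\mathcal{A}$ be a finite alphabet with $|\mathcal{A}|\le 2k-1$, let $A_1,\dots,A_k$ be $\{0,1\}$-matrices indexed by $\mathcal{A}$, and let $X=X_{\mathbf{A},\mathbf{A}^t}$ be the Markov tree shift on $F_k$ given by the $2k$-tuple $(A_1,\dots,A_k,A_1^t,\dots,A_k^t)$. Then the topological entropy $\lim_{n\to\infty}\log p_n/|\Delta_n|$ of $X$ exists and equals $h^{(s)}(X)$.
   Context: For a $\{0,1\}$-matrix $K$ indexed by generators $S=\{s_1,\dots,s_N\}$, $\langle S\mid K\rangle$ is the semigroup generated by $S$ with relations $s_is_j=1_G$ iff $K(s_i,s_j)=0$; here this is $F_k$ with $s_{i+k}=s_i^{-1}$. Every $g$ has a unique minimal (reduced) word $g=g_1\cdots g_n$, $|g|=n$. $\Delta_n=\{h\in G:|h|\le n\}$ and $\bar{\Delta}^{(g)}_n=\{gh:|h|\le n,\ |gh|=|g|+|h|\}$. A pattern $u:H\to\mathcal{A}$ ($H$ finite) is accepted by $t\in\mathcal{A}^G$ if there is $g$ with $t_{gh}=u_h$ for all $h\in H$; $p_n$ (resp. $p^{(g)}_n$) is the number of patterns on $\Delta_n$ (resp. $\bar{\Delta}^{(g)}_n$) accepted by some $t\in X$. For an $N$-tuple $(B_1,\dots,B_N)$ of $\{0,1\}$-matrices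 indexed by $\mathcal{A}$ the Markov tree shift is $\{t\in\mathcal{A}^G: B_i(t_g,t_{gs_i})=1 \text{ whenever } |gs_i|=|g|+1\}$. $A^t$ is the transpose. The $i$th stem entropy is $h^{(s_i)}(X)=\limsup_n\log p^{(s_i)}_n/|\bar{\Delta}^{(s_i)}_n|$; these coincide (as $K$ is primitive for $k\ge2$) and $h^{(s)}(X)$ is their common value. *)

theory Defs
  imports "HOL-Analysis.Analysis"
begin

text \<open>Free group F_k = <S_2k | K>, generators s_1..s_2k encoded as 0..2k-1,
  with s_(i+k) = s_i^(-1), i.e. inverse of generator i is (i + k) mod 2k.
  Group elements are represented by their unique reduced words (lists of generators).\<close>

definition ginv :: "nat \<Rightarrow> nat \<Rightarrow> nat" where
  "ginv k i = (i + k) mod (2 * k)"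

definition Kmat :: "nat \<Rightarrow> nat \<Rightarrow> nat \<Rightarrow> bool" where
  "Kmat k i j \<longleftrightarrow> \<not> (i + k = j \<or> j + k = i)"

definition reduced :: "nat \<Rightarrow> nat list \<Rightarrow> bool" where
  "reduced k w \<longleftrightarrow> (\<forall>a\<in>set w. a < 2 * k) \<and>
     (\<forall>j. Suc j < length w \<longrightarrow> Kmat k (w ! j) (w ! Suc j))"

definition FG :: "nat \<Rightarrow> nat list set" where
  "FG k = {w. reduced k w}"

text \<open>Product of reduced words: cancel the end of u against the start of v.
  First argument is u reversed.\<close>
fun gmult_rev :: "nat \<Rightarrow> nat list \<Rightarrow> nat list \<Rightarrow> nat list" where
  "gmult_rev k [] v = v"
| "gmult_rev k (a # ru) [] = rev (a # ru)"
| "gmult_rev k (a # ru) (b # v) =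
     (if \<not> Kmat k a b then gmult_rev k ru v else rev (a # ru) @ b # v)"

definition gmult :: "nat \<Rightarrow> nat list \<Rightarrow> nat list \<Rightarrow> nat list" where
  "gmult k u v = gmult_rev k (rev u) v"

definition Delta :: "nat \<Rightarrow> nat \<Rightarrow> nat list set" where
  "Delta k n = {h \<in> FG k. length h \<le> n}"

definition DeltaBar :: "nat \<Rightarrow> nat list \<Rightarrow> nat \<Rightarrow> nat list set" where
  "DeltaBar k g n = {gmult k g h | h. h \<in> FG k \<and> length h \<le> n \<and>
                      length (gmult k g h) = length g + length h}"

definition npat :: "nat \<Rightarrow> (nat list \<Rightarrow> 'a) set \<Rightarrow> nat list set \<Rightarrow> nat" where
  "npat k X H = card {restrict (\<lambda>h. t (gmult k g h)) H | g t. g \<in> FG k \<and> t \<in> X}"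

definition markov_tree_shift ::
  "nat \<Rightarrow> (nat \<Rightarrow> 'a \<Rightarrow> 'a \<Rightarrow> bool) \<Rightarrow> (nat list \<Rightarrow> 'a) set" where
  "markov_tree_shift k B = {t. \<forall>g\<in>FG k. \<forall>i<2 * k.
      length (gmult k g [i]) = length g + 1 \<longrightarrow> B i (t g) (t (gmult k g [i]))}"

definition AAt :: "nat \<Rightarrow> (nat \<Rightarrow> 'a \<Rightarrow> 'a \<Rightarrow> bool) \<Rightarrow> nat \<Rightarrow> 'a \<Rightarrow> 'a \<Rightarrow> bool" where
  "AAt k A i = (if i < k then A i else (\<lambda>a b. A (i - k) b a))"

definition stem_entropy :: "nat \<Rightarrow> (nat list \<Rightarrow> 'a) set \<Rightarrow> nat \<Rightarrow> ereal" where
  "stem_entropy k X i = limsup (\<lambda>n. ereal (ln (real (npat k X (DeltaBar k [i] n)))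
                                       / real (card (DeltaBar k [i] n))))"

end

theory Submission
  imports Defs
begin

text \<open>Let S_i(n) be the number of patterns on the branch of reduced words of length at most
  n + 1 starting with s_i, and P(n) the number of patterns on the ball of radius n. Since the
  tuple has the form (A, A^t), the shift is invariant under translation, so a branch is the root
  followed by 2k - 1 branches of smaller depth; hence
  ln S_i(n+1) <= ln |A| + sum of ln S_j(n) over j /= i^-1, and similarly for P(n+1).
  Conversely, as |A| < 2k, two different generators i, i' have a common most frequent root
  symbol, and gluing configurations with that root symbol gives
  ln S_i(n+1) + ln S_i'(n+1) <= 2 ln |A| + ln P(n+1) + sum of ln S_j(n) over j /= i^-1, i'^-1.
  After adding ln |A| / (2k - 3) to every term and normalizing by (2k - 1)^n, the total of the
  upper recursion is nonincreasing and two steps of it pull every term towards the average, so all ln S_i(n) / (2k - 1)^n converge to a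
  common limit; the lower bound then pins down ln P(n+1) / (2k - 1)^n. Dividing by the sizes of
  the branches and balls, which grow like (2k - 1)^(n+1) / (2k - 2), both entropy quotients have
  the same limit.\<close>

lemma mem_FG_iff: "g \<in> FG k \<longleftrightarrow> reduced k g"
  by (simp add: FG_def)

lemma reduced_Nil [simp]: "reduced k []"
  by (simp add: reduced_def)

lemma reduced_Cons:
  "reduced k (x # xs) \<longleftrightarrow> x < 2 * k \<and> reduced k xs \<and> (xs \<noteq> [] \<longrightarrow> Kmat k x (hd xs))"
  unfolding reduced_def by (cases xs) (auto simp: nth_Cons split: nat.splits)

lemma reduced_snoc:
  "reduced k (xs @ [x]) \<longleftrightarrow> reduced k xs \<and> x < 2 * k \<and> (xs \<noteq> [] \<longrightarrow> Kmat k (last xs) x)"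
  by (induction xs) (auto simp: reduced_Cons hd_append)

lemma reduced_hd_less: "reduced k w \<Longrightarrow> w \<noteq> [] \<Longrightarrow> hd w < 2 * k"
  by (cases w) (auto simp: reduced_Cons)

lemma gmult_Nil [simp]: "gmult k [] h = h"
  by (simp add: gmult_def)

lemma gmult_rev_Nil2 [simp]: "gmult_rev k ru [] = rev ru"
  by (cases ru) auto

lemma gmult_singleton_right:
  "gmult k g [i] = (if g \<noteq> [] \<and> \<not> Kmat k (last g) i then butlast g else g @ [i])"
  by (cases g rule: rev_cases) (simp_all add: gmult_def)

lemma gmult_singleton_left:
  "gmult k [a] h = (case h of [] \<Rightarrow> [a] | c # h' \<Rightarrow> if Kmat k a c then a # h else h')"
  unfolding gmult_def by (cases h) auto

lemma gmult_rev_snoc: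
  "reduced k (a # rev ru) \<Longrightarrow> gmult_rev k (ru @ [a]) v = gmult k [a] (gmult_rev k ru v)"
proof (induction ru arbitrary: v)
  case Nil
  then show ?case by (simp add: gmult_def)
next
  case (Cons b ru)
  have "reduced k (a # rev ru)"
    using Cons.prems reduced_snoc[of k "a # rev ru" b] by simp
  moreover have "Kmat k a (hd (rev ru @ [b]))"
    using Cons.prems by (simp add: reduced_Cons)
  ultimately show ?case
    using Cons.IH by (cases v; cases "rev ru @ [b]") (auto simp: gmult_singleton_left)
qed

lemma gmult_Cons: "reduced k (a # g) \<Longrightarrow> gmult k (a # g) h = gmult k [a] (gmult k g h)"
  using gmult_rev_snoc[of k a "rev g" h] by (simp add: gmult_def)

lemma ginv_less: "0 < k \<Longrightarrow> ginv k i < 2 * k"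
  by (simp add: ginv_def)

lemma ginv_ginv: "0 < k \<Longrightarrow> i < 2 * k \<Longrightarrow> ginv k (ginv k i) = i"
  unfolding ginv_def by (cases "i < k") (auto simp: mod_if)

lemma not_Kmat_iff_ginv: "0 < k \<Longrightarrow> i < 2 * k \<Longrightarrow> x < 2 * k \<Longrightarrow> \<not> Kmat k i x \<longleftrightarrow> x = ginv k i"
  unfolding Kmat_def ginv_def by (cases "i < k") (auto simp: mod_if)

lemma AAt_swap:
  "a < 2 * k \<Longrightarrow> i < 2 * k \<Longrightarrow> \<not> Kmat k a i \<Longrightarrow> AAt k A i x y = AAt k A a y x"
  unfolding AAt_def Kmat_def by auto

lemma markov_tree_shift_iff:
  "t \<in> markov_tree_shift k B \<longleftrightarrow>
     (\<forall>g\<in>FG k. \<forall>i<2 * k. (g = [] \<or> Kmat k (last g) i) \<longrightarrow> B i (t g) (t (g @ [i])))"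
  unfolding markov_tree_shift_def by (auto simp: gmult_singleton_right)

text \<open>Shift invariance relies on the tuple being of the form (A, A^t): an edge traversed
  backwards after cancelling a generator carries the transposed matrix.\<close>
lemma markov_tree_shift_translate_generator:
  assumes t: "t \<in> markov_tree_shift k (AAt k A)" and a: "a < 2 * k"
  shows "(\<lambda>h. t (gmult k [a] h)) \<in> markov_tree_shift k (AAt k A)"
  unfolding markov_tree_shift_iff
proof (intro ballI allI impI)
  fix g i assume g: "g \<in> FG k" and i: "i < 2 * k" and c: "g = [] \<or> Kmat k (last g) i"
  note T = t[unfolded markov_tree_shift_iff, rule_format]
  show "AAt k A i (t (gmult k [a] g)) (t (gmult k [a] (g @ [i])))"
  proof (cases g)
    case Nil
    show ?thesis
    proof (cases "Kmat k a i")
      case True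
      with T[of "[a]" i] a i Nil show ?thesis by (simp add: mem_FG_iff reduced_Cons gmult_singleton_left)
    next
      case False
      with T[of "[]" a] AAt_swap[OF a i False, of A "t [a]" "t []"] a Nil show ?thesis
        by (simp add: mem_FG_iff gmult_singleton_left)
    qed
  next
    case (Cons c g')
    then have "reduced k g'" "c < 2 * k" "g' \<noteq> [] \<longrightarrow> Kmat k c (hd g')"
      using g by (auto simp: mem_FG_iff reduced_Cons)
    then show ?thesis
      using T[of "a # g" i] T[of g' i] g a i c Cons
      by (cases "Kmat k a c"; cases g') (auto simp: mem_FG_iff reduced_Cons gmult_singleton_left)
  qed
qed

lemma markov_tree_shift_translate:
  assumes "g \<in> FG k" and "t \<in> markov_tree_shift k (AAt k A)"
  shows "(\<lambda>h. t (gmult k g h)) \<in> markov_tree_shift k (AAt k A)"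
  using assms
proof (induction g arbitrary: t)
  case Nil
  then show ?case by simp
next
  case (Cons a g)
  then have r: "reduced k (a # g)" and a: "a < 2 * k" and g: "g \<in> FG k"
    by (auto simp: mem_FG_iff reduced_Cons)
  show ?case
    using Cons.IH[OF g markov_tree_shift_translate_generator[OF Cons.prems(2) a]]
    by (simp add: gmult_Cons[OF r])
qed

lemma markov_tree_shift_glue:
  assumes "t1 \<in> markov_tree_shift k B" and "t2 \<in> markov_tree_shift k B" and "t1 [] = t2 []"
  shows "(\<lambda>w. if w \<noteq> [] \<and> P (hd w) then t1 w else t2 w) \<in> markov_tree_shift k B"
  using assms unfolding markov_tree_shift_iff by (fastforce simp: hd_append)

definition branch :: "nat \<Rightarrow> nat \<Rightarrow> nat \<Rightarrow> nat list set" where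
  "branch k j n = {w \<in> FG k. w \<noteq> [] \<and> hd w = j \<and> length w \<le> Suc n}"

definition followers :: "nat \<Rightarrow> nat \<Rightarrow> nat \<Rightarrow> nat list set" where
  "followers k i n = {w \<in> FG k. length w \<le> n \<and> (w = [] \<or> hd w \<noteq> ginv k i)}"

fun branch_size :: "nat \<Rightarrow> nat \<Rightarrow> nat" where
  "branch_size k 0 = 1"
| "branch_size k (Suc n) = 1 + (2 * k - 1) * branch_size k n"

lemma DeltaBar_singleton_eq_branch:
  assumes "i < 2 * k"
  shows "DeltaBar k [i] n = branch k i n"
proof (intro set_eqI iffI)
  fix x assume "x \<in> DeltaBar k [i] n"
  then obtain h where "h \<in> FG k" "length h \<le> n" "length (gmult k [i] h) = Suc (length h)"
    and "x = gmult k [i] h"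
    unfolding DeltaBar_def by auto
  with assms show "x \<in> branch k i n"
    by (cases h) (auto simp: branch_def gmult_singleton_left mem_FG_iff reduced_Cons split: if_splits)
next
  fix x assume "x \<in> branch k i n"
  then obtain h where x: "x = i # h" and "reduced k (i # h)" and "length h \<le> n"
    unfolding branch_def mem_FG_iff by (cases x) auto
  moreover from this have "h \<in> FG k" and "gmult k [i] h = i # h"
    by (cases h; auto simp: mem_FG_iff reduced_Cons gmult_singleton_left)+
  ultimately show "x \<in> DeltaBar k [i] n"
    unfolding DeltaBar_def by force
qed

lemma branch_eq_image_Cons_followers:
  assumes "0 < k" "i < 2 * k"
  shows "branch k i n = (#) i ` followers k i n"
proof (intro set_eqI iffI)
  fix x assume "x \<in> branch k i n"
  then obtain h where x: "x = i # h" and "reduced k (i # h)" and "length h \<le> n"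
    unfolding branch_def mem_FG_iff by (cases x) auto
  then have "h \<in> followers k i n"
    using not_Kmat_iff_ginv[OF assms] by (cases h) (auto simp: followers_def mem_FG_iff reduced_Cons)
  then show "x \<in> (#) i ` followers k i n"
    using x by blast
next
  fix x assume "x \<in> (#) i ` followers k i n"
  then obtain h where "x = i # h" and "h \<in> followers k i n"
    by blast
  with assms show "x \<in> branch k i n"
    using not_Kmat_iff_ginv[OF assms, of "hd h"]
    by (cases h) (auto simp: followers_def branch_def mem_FG_iff reduced_Cons)
qed

lemma followers_0: "followers k i 0 = {[]}"
  by (auto simp: followers_def mem_FG_iff)

lemma followers_Suc:
  "followers k i (Suc n) = insert [] (\<Union>j\<in>{..<2 * k} - {ginv k i}. branch k j n)"
  by (auto simp: followers_def branch_def mem_FG_iff dest: reduced_hd_less)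

lemma Delta_Suc: "Delta k (Suc n) = insert [] (\<Union>j\<in>{..<2 * k}. branch k j n)"
  by (auto simp: Delta_def branch_def mem_FG_iff dest: reduced_hd_less)

lemma finite_Delta: "finite (Delta k n)"
proof -
  have "Delta k n \<subseteq> {w. set w \<subseteq> {..<2 * k} \<and> length w \<le> n}"
    by (auto simp: Delta_def mem_FG_iff reduced_def)
  then show ?thesis
    by (rule finite_subset) (simp add: finite_lists_length_le)
qed

lemma finite_branch: "finite (branch k j n)"
  by (rule finite_subset[OF _ finite_Delta[of k "Suc n"]]) (auto simp: branch_def Delta_def)

lemma finite_followers: "finite (followers k i n)"
  by (rule finite_subset[OF _ finite_Delta[of k n]]) (auto simp: followers_def Delta_def)

lemma card_insert_Nil_UN_branch:
  assumes "J \<subseteq> {..<2 * k}" and "\<And>j. j \<in> J \<Longrightarrow> card (branch k j n) = m"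
  shows "card (insert [] (\<Union>j\<in>J. branch k j n)) = Suc (card J * m)"
proof -
  have "card (\<Union>j\<in>J. branch k j n) = (\<Sum>j\<in>J. card (branch k j n))"
    using assms(1) by (intro card_UN_disjoint)
      (simp_all add: finite_branch finite_subset, auto simp: branch_def)
  then show ?thesis
    using assms by (subst card_insert_disjoint)
      (simp_all add: finite_branch finite_subset, auto simp: branch_def)
qed

lemma card_branch_eq_card_followers:
  "0 < k \<Longrightarrow> i < 2 * k \<Longrightarrow> card (branch k i n) = card (followers k i n)"
  by (simp add: branch_eq_image_Cons_followers card_image)

lemma card_followers:
  assumes "0 < k" "i < 2 * k"
  shows "card (followers k i n) = branch_size k n"
  using assms(2)
proof (induction n arbitrary: i)
  case 0
  then show ?case by (simp add: followers_0)
next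
  case (Suc n)
  have "card (followers k i (Suc n)) = Suc (card ({..<2 * k} - {ginv k i}) * branch_size k n)"
    unfolding followers_Suc using Suc.IH assms(1)
    by (intro card_insert_Nil_UN_branch) (auto simp: card_branch_eq_card_followers)
  then show ?case
    using ginv_less[OF assms(1)] by simp
qed

lemma card_branch: "0 < k \<Longrightarrow> j < 2 * k \<Longrightarrow> card (branch k j n) = branch_size k n"
  by (simp add: card_branch_eq_card_followers card_followers)

lemma card_Delta_Suc: "0 < k \<Longrightarrow> card (Delta k (Suc n)) = Suc (2 * k * branch_size k n)"
  unfolding Delta_Suc by (subst card_insert_Nil_UN_branch) (auto simp: card_branch)

definition patterns :: "(nat list \<Rightarrow> 'a) set \<Rightarrow> nat list set \<Rightarrow> (nat list \<Rightarrow> 'a) set" where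
  "patterns X H = (\<lambda>t. restrict t H) ` X"

definition patterns_rooted :: "(nat list \<Rightarrow> 'a) set \<Rightarrow> 'a \<Rightarrow> nat list set \<Rightarrow> (nat list \<Rightarrow> 'a) set" where
  "patterns_rooted X a H = (\<lambda>t. restrict t H) ` {t \<in> X. t [] = a}"

lemma npat_eq_card_patterns:
  assumes "X = markov_tree_shift k (AAt k A)"
  shows "npat k X H = card (patterns X H)"
proof -
  have "{restrict (\<lambda>h. t (gmult k g h)) H | g t. g \<in> FG k \<and> t \<in> X} = patterns X H"
    using assms markov_tree_shift_translate[of _ k _ A]
    by (auto simp: patterns_def mem_FG_iff intro!: exI[of _ "[]"])
  then show ?thesis
    unfolding npat_def by simp
qed

lemma finite_patterns: "finite H \<Longrightarrow> finite (patterns (X :: (nat list \<Rightarrow> 'a::finite) set) H)"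
  by (rule finite_subset[of _ "PiE H (\<lambda>_. UNIV)"]) (auto simp: patterns_def finite_PiE)

lemma card_patterns_pos:
  "X \<noteq> {} \<Longrightarrow> finite H \<Longrightarrow> 0 < card (patterns (X :: (nat list \<Rightarrow> 'a::finite) set) H)"
  using finite_patterns[of H X] by (auto simp: patterns_def card_gt_0_iff)

lemma card_patterns_Un_le:
  fixes X :: "(nat list \<Rightarrow> 'a::finite) set"
  assumes "finite H1" "finite H2"
  shows "card (patterns X (H1 \<union> H2)) \<le> card (patterns X H1) * card (patterns X H2)"
proof -
  let ?split = "\<lambda>u. (restrict u H1, restrict u H2)"
  let ?merge = "\<lambda>(v, v'). restrict (\<lambda>w. if w \<in> H1 then v w else v' w) (H1 \<union> H2)"
  have "inj_on ?split (patterns X (H1 \<union> H2))"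
    by (rule inj_on_inverseI[where g = ?merge]) (auto simp: patterns_def)
  moreover have "?split ` patterns X (H1 \<union> H2) \<subseteq> patterns X H1 \<times> patterns X H2"
    by (auto simp: patterns_def)
  ultimately have "card (patterns X (H1 \<union> H2)) \<le> card (patterns X H1 \<times> patterns X H2)"
    using assms by (intro card_inj_on_le finite_cartesian_product finite_patterns)
  then show ?thesis
    by (simp add: card_cartesian_product)
qed

lemma card_patterns_UN_le:
  fixes X :: "(nat list \<Rightarrow> 'a::finite) set"
  assumes "finite J" "\<And>j. j \<in> J \<Longrightarrow> finite (H j)"
  shows "card (patterns X (\<Union>j\<in>J. H j)) \<le> (\<Prod>j\<in>J. card (patterns X (H j)))"
  using assms
proof (induction J rule: finite_induct)
  case empty
  have "patterns X {} \<subseteq> {\<lambda>_. undefined}"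
    by (auto simp: patterns_def)
  then show ?case
    using card_mono[of "{\<lambda>_. undefined}" "patterns X {}"] by simp
next
  case (insert j J)
  have "card (patterns X (\<Union>j\<in>insert j J. H j)) \<le> card (patterns X (H j)) * card (patterns X (\<Union>j\<in>J. H j))"
    using insert.prems insert.hyps(1) by (simp only: UN_insert) (intro card_patterns_Un_le; simp)
  also have "\<dots> \<le> card (patterns X (H j)) * (\<Prod>j\<in>J. card (patterns X (H j)))"
    using insert by (intro mult_le_mono2) auto
  finally show ?case
    using insert by simp
qed

lemma card_patterns_insert_le:
  fixes X :: "(nat list \<Rightarrow> 'a::finite) set"
  assumes "finite H"
  shows "card (patterns X (insert w H)) \<le> CARD('a) * card (patterns X H)"
proof -
  have singleton: "patterns X {w} \<subseteq> range (\<lambda>a. restrict (\<lambda>_. a) {w})"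
  proof
    fix u assume "u \<in> patterns X {w}"
    then obtain t where "u = restrict t {w}"
      by (auto simp: patterns_def)
    then show "u \<in> range (\<lambda>a. restrict (\<lambda>_. a) {w})"
      by (intro image_eqI[of _ _ "t w"]) (auto simp: restrict_def)
  qed
  have "card (patterns X {w}) \<le> CARD('a)"
    by (rule surj_card_le[OF _ singleton]) simp
  moreover have "card (patterns X ({w} \<union> H)) \<le> card (patterns X {w}) * card (patterns X H)"
    using assms by (intro card_patterns_Un_le) auto
  ultimately show ?thesis
    by (simp add: order_trans)
qed

lemma card_patterns_branch_le_followers:
  fixes A :: "nat \<Rightarrow> 'a::finite \<Rightarrow> 'a \<Rightarrow> bool"
  assumes "0 < k" "X = markov_tree_shift k (AAt k A)" "i < 2 * k"
  shows "card (patterns X (branch k i n)) \<le> card (patterns X (followers k i n))"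
proof -
  have "patterns X (branch k i n)
      \<subseteq> (\<lambda>v. restrict (\<lambda>w. v (tl w)) (branch k i n)) ` patterns X (followers k i n)"
  proof
    fix u assume "u \<in> patterns X (branch k i n)"
    then obtain t where t: "t \<in> X" and u: "u = restrict t (branch k i n)"
      unfolding patterns_def by blast
    let ?t' = "\<lambda>h. t (gmult k [i] h)"
    have "?t' \<in> X"
      using assms t markov_tree_shift_translate[of "[i]" k t A] by (simp add: mem_FG_iff reduced_Cons)
    moreover have "u = restrict (\<lambda>w. restrict ?t' (followers k i n) (tl w)) (branch k i n)"
      using u assms not_Kmat_iff_ginv[OF assms(1,3)]
      by (auto simp: branch_eq_image_Cons_followers[OF assms(1,3)] fun_eq_iff followers_def
          gmult_singleton_left mem_FG_iff split: list.split dest: reduced_hd_less)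
    ultimately show "u \<in> (\<lambda>v. restrict (\<lambda>w. v (tl w)) (branch k i n)) ` patterns X (followers k i n)"
      unfolding patterns_def by blast
  qed
  then show ?thesis
    by (rule surj_card_le[OF finite_patterns[OF finite_followers]])
qed

lemma card_patterns_branch_Suc_le:
  fixes A :: "nat \<Rightarrow> 'a::finite \<Rightarrow> 'a \<Rightarrow> bool"
  assumes "0 < k" "X = markov_tree_shift k (AAt k A)" "i < 2 * k"
  shows "card (patterns X (branch k i (Suc n)))
    \<le> CARD('a) * (\<Prod>j\<in>{..<2 * k} - {ginv k i}. card (patterns X (branch k j n)))"
proof -
  have "card (patterns X (branch k i (Suc n))) \<le> card (patterns X (followers k i (Suc n)))"
    using assms by (rule card_patterns_branch_le_followers)
  also have "\<dots> \<le> CARD('a) * card (patterns X (\<Union>j\<in>{..<2 * k} - {ginv k i}. branch k j n))"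
    unfolding followers_Suc by (rule card_patterns_insert_le) (simp add: finite_branch)
  also have "\<dots> \<le> CARD('a) * (\<Prod>j\<in>{..<2 * k} - {ginv k i}. card (patterns X (branch k j n)))"
    by (rule mult_le_mono2, rule card_patterns_UN_le) (simp_all add: finite_branch)
  finally show ?thesis .
qed

lemma card_patterns_Delta_Suc_le:
  fixes X :: "(nat list \<Rightarrow> 'a::finite) set"
  shows "card (patterns X (Delta k (Suc n)))
    \<le> CARD('a) * (\<Prod>j<2 * k. card (patterns X (branch k j n)))"
proof -
  have "card (patterns X (Delta k (Suc n)))
      \<le> CARD('a) * card (patterns X (\<Union>j<2 * k. branch k j n))"
    unfolding Delta_Suc by (rule card_patterns_insert_le) (simp add: finite_branch)
  also have "\<dots> \<le> CARD('a) * (\<Prod>j<2 * k. card (patterns X (branch k j n)))"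
    by (rule mult_le_mono2, rule card_patterns_UN_le) (simp_all add: finite_branch)
  finally show ?thesis .
qed

lemma ex_card_patterns_le_patterns_rooted:
  fixes X :: "(nat list \<Rightarrow> 'a::finite) set"
  shows "\<exists>a. card (patterns X H) \<le> CARD('a) * card (patterns_rooted X a H)"
proof -
  let ?c = "\<lambda>a. card (patterns_rooted X a H)"
  obtain a where a: "\<And>b. ?c b \<le> ?c a"
    using ex_has_greatest_nat[of "\<lambda>_. True" undefined ?c "Suc (Max (range ?c))"]
    by (auto simp: le_imp_less_Suc)
  have "patterns X H = (\<Union>b. patterns_rooted X b H)"
    unfolding patterns_def patterns_rooted_def by blast
  then have "card (patterns X H) \<le> (\<Sum>b\<in>UNIV. ?c b)"
    using card_UN_le[of UNIV "\<lambda>b. patterns_rooted X b H"] by simp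
  also have "\<dots> \<le> CARD('a) * ?c a"
    using sum_bounded_above[of UNIV ?c "?c a"] a by simp
  finally show ?thesis ..
qed

text \<open>Two configurations with the same root symbol are glued by keeping the first one off the
  branch of ginv k i and the second one on it. The pair of rooted patterns is recovered from the
  glued pattern on the ball together with the second pattern on the branches W that both
  follower sets share.\<close>
lemma card_patterns_rooted_mult_le:
  fixes X :: "(nat list \<Rightarrow> 'a::finite) set" and n :: nat
  assumes "X = markov_tree_shift k B" "ginv k i \<noteq> ginv k i'"
  defines "W \<equiv> \<Union>j\<in>{..<2 * k} - {ginv k i, ginv k i'}. branch k j n"
  shows "card (patterns_rooted X a (followers k i (Suc n))) * card (patterns_rooted X a (followers k i' (Suc n)))
    \<le> card (patterns X (Delta k (Suc n))) * card (patterns X W)"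
proof -
  let ?C = "followers k i (Suc n)" and ?C' = "followers k i' (Suc n)" and ?D = "Delta k (Suc n)"
  let ?e = "ginv k i"
  let ?glued = "\<lambda>u u'. restrict (\<lambda>w. if w \<noteq> [] \<and> hd w \<noteq> ?e then u w else u' w) ?D"
  let ?f = "\<lambda>(u, u'). (?glued u u', restrict u' W)"
  let ?g = "\<lambda>(v, z). (restrict v ?C, restrict (\<lambda>w. if w \<in> W then z w else v w) ?C')"
  have C: "w \<in> ?C \<longleftrightarrow> w \<in> ?D \<and> (w = [] \<or> hd w \<noteq> ?e)" for w
    by (auto simp: followers_def Delta_def)
  have C': "w \<in> ?C' \<longleftrightarrow> w \<in> ?D \<and> (w = [] \<or> hd w \<noteq> ginv k i')" for w
    by (auto simp: followers_def Delta_def)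
  have W: "w \<in> W \<longleftrightarrow> w \<in> ?D \<and> w \<noteq> [] \<and> hd w \<noteq> ?e \<and> hd w \<noteq> ginv k i'" for w
    by (auto simp: W_def branch_def Delta_def mem_FG_iff dest: reduced_hd_less)
  have "?g (?f x) = x" if "x \<in> patterns_rooted X a ?C \<times> patterns_rooted X a ?C'" for x
    using that assms(2) unfolding patterns_rooted_def
    by (auto simp: C C' W fun_eq_iff restrict_def)
  then have "inj_on ?f (patterns_rooted X a ?C \<times> patterns_rooted X a ?C')"
    by (rule inj_on_inverseI)
  moreover have "?f ` (patterns_rooted X a ?C \<times> patterns_rooted X a ?C') \<subseteq> patterns X ?D \<times> patterns X W"
  proof clarify
    fix u u' assume "u \<in> patterns_rooted X a ?C" "u' \<in> patterns_rooted X a ?C'"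
    then obtain t1 t2 where t1: "t1 \<in> X" "t1 [] = a" "u = restrict t1 ?C"
      and t2: "t2 \<in> X" "t2 [] = a" "u' = restrict t2 ?C'"
      unfolding patterns_rooted_def by blast
    let ?t = "\<lambda>w. if w \<noteq> [] \<and> hd w \<noteq> ?e then t1 w else t2 w"
    have "?t \<in> X"
      using markov_tree_shift_glue[of t1 k B t2 "\<lambda>c. c \<noteq> ?e"] t1 t2 assms(1) by simp
    moreover have "?glued u u' = restrict ?t ?D" and "restrict u' W = restrict t2 W"
      using t1(3) t2(3) assms(2) by (auto simp: C C' W fun_eq_iff)
    ultimately show "?glued u u' \<in> patterns X ?D \<and> restrict u' W \<in> patterns X W"
      using t2(1) unfolding patterns_def by blast
  qed
  moreover have "finite (patterns X ?D \<times> patterns X W)"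
    by (auto simp: W_def finite_Delta finite_branch intro!: finite_patterns)
  ultimately have "card (patterns_rooted X a ?C \<times> patterns_rooted X a ?C') \<le> card (patterns X ?D \<times> patterns X W)"
    by (rule card_inj_on_le)
  then show ?thesis
    by (simp add: card_cartesian_product)
qed

text \<open>Pigeonhole: with fewer symbols than generators, two different generators share a root
  symbol that is most frequent among the rooted patterns of their follower sets.\<close>
lemma ex_card_patterns_branch_pair_le:
  fixes A :: "nat \<Rightarrow> 'a::finite \<Rightarrow> 'a \<Rightarrow> bool"
  assumes k: "0 < k" and X: "X = markov_tree_shift k (AAt k A)" and card: "CARD('a) < 2 * k"
  shows "\<exists>i i'. i < 2 * k \<and> i' < 2 * k \<and> ginv k i \<noteq> ginv k i' \<and>
    card (patterns X (branch k i (Suc n))) * card (patterns X (branch k i' (Suc n)))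
      \<le> CARD('a)^2 * card (patterns X (Delta k (Suc n))) *
         (\<Prod>j\<in>{..<2 * k} - {ginv k i, ginv k i'}. card (patterns X (branch k j n)))"
proof -
  have "\<forall>i. \<exists>a. card (patterns X (followers k i (Suc n)))
      \<le> CARD('a) * card (patterns_rooted X a (followers k i (Suc n)))"
    using ex_card_patterns_le_patterns_rooted by blast
  then obtain r where r: "\<And>i. card (patterns X (followers k i (Suc n)))
      \<le> CARD('a) * card (patterns_rooted X (r i) (followers k i (Suc n)))"
    by metis
  have "\<not> inj_on r {..<2 * k}"
  proof
    assume "inj_on r {..<2 * k}"
    then have "2 * k \<le> CARD('a)"
      using card_inj_on_le[of r "{..<2 * k}" UNIV] by simp
    with card show False
      by simp
  qed
  then obtain i i' where i: "i < 2 * k" and i': "i' < 2 * k" and "i \<noteq> i'" and "r i = r i'"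
    unfolding inj_on_def by auto
  then have e: "ginv k i \<noteq> ginv k i'"
    using ginv_ginv[OF k i] ginv_ginv[OF k i'] by metis
  define W where "W = (\<Union>j\<in>{..<2 * k} - {ginv k i, ginv k i'}. branch k j n)"
  have "card (patterns X (branch k i (Suc n))) * card (patterns X (branch k i' (Suc n)))
      \<le> card (patterns X (followers k i (Suc n))) * card (patterns X (followers k i' (Suc n)))"
    using card_patterns_branch_le_followers[OF k X] i i' by (intro mult_le_mono)
  also have "\<dots> \<le> (CARD('a) * card (patterns_rooted X (r i) (followers k i (Suc n))))
      * (CARD('a) * card (patterns_rooted X (r i) (followers k i' (Suc n))))"
    using r[of i] r[of i'] \<open>r i = r i'\<close> by (intro mult_le_mono) simp_all
  also have "\<dots> = CARD('a)^2 * (card (patterns_rooted X (r i) (followers k i (Suc n)))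
      * card (patterns_rooted X (r i) (followers k i' (Suc n))))"
    by (simp add: power2_eq_square)
  also have "\<dots> \<le> CARD('a)^2 * (card (patterns X (Delta k (Suc n))) * card (patterns X W))"
    unfolding W_def using X e by (intro mult_le_mono2 card_patterns_rooted_mult_le)
  also have "\<dots> \<le> CARD('a)^2 * (card (patterns X (Delta k (Suc n)))
      * (\<Prod>j\<in>{..<2 * k} - {ginv k i, ginv k i'}. card (patterns X (branch k j n))))"
    unfolding W_def by (rule mult_le_mono2, rule mult_le_mono2, rule card_patterns_UN_le)
      (simp_all add: finite_branch)
  finally show ?thesis
    using i i' e by (intro exI[of _ i] exI[of _ i']) (simp add: mult.assoc)
qed

lemma two_step_contraction_decay:
  fixes x \<delta> :: "nat \<Rightarrow> real"
  assumes q: "0 \<le> q" and B: "\<And>n. \<bar>x n\<bar> \<le> B"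
    and rec: "\<And>n. x (n + 2) \<le> \<delta> n + q * x n"
    and \<delta>: "\<And>n. N \<le> n \<Longrightarrow> \<bar>\<delta> n\<bar> \<le> \<epsilon> * (1 - q)" and \<epsilon>: "0 \<le> \<epsilon>"
  shows "x (N + m) \<le> \<epsilon> + B * q ^ (m div 2)"
proof (induction m rule: less_induct)
  case (less m)
  show ?case
  proof (cases "m < 2")
    case True
    then show ?thesis
      using B[of "N + m"] \<epsilon> by (simp add: abs_le_iff)
  next
    case False
    define m' where "m' = m - 2"
    have m: "m = m' + 2"
      using False by (simp add: m'_def)
    have "x (N + m) \<le> \<delta> (N + m') + q * x (N + m')"
      using rec[of "N + m'"] by (simp add: m add.assoc)
    also have "\<dots> \<le> \<epsilon> * (1 - q) + q * (\<epsilon> + B * q ^ (m' div 2))"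
      using \<delta>[of "N + m'"] less[of m'] q by (intro add_mono mult_left_mono) (auto simp: m)
    also have "\<dots> = \<epsilon> + B * q ^ (m div 2)"
      by (simp add: m field_simps)
    finally show ?thesis .
  qed
qed

lemma eventually_le_of_two_step_contraction:
  fixes x \<delta> :: "nat \<Rightarrow> real"
  assumes q: "0 \<le> q" "q < 1" and \<delta>: "\<delta> \<longlonglongrightarrow> 0" and B: "\<And>n. \<bar>x n\<bar> \<le> B"
    and rec: "\<And>n. x (n + 2) \<le> \<delta> n + q * x n" and \<epsilon>: "0 < \<epsilon>"
  shows "eventually (\<lambda>n. x n \<le> \<epsilon>) sequentially"
proof -
  have "eventually (\<lambda>n. \<bar>\<delta> n\<bar> < \<epsilon> / 2 * (1 - q)) sequentially"
    using \<delta> \<epsilon> q by (intro order_tendstoD(2)[OF tendsto_rabs_zero[OF \<delta>]]) simp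
  then obtain N where N: "\<And>n. N \<le> n \<Longrightarrow> \<bar>\<delta> n\<bar> \<le> \<epsilon> / 2 * (1 - q)"
    unfolding eventually_sequentially by (meson less_imp_le)
  have "(\<lambda>M. B * q ^ M) \<longlonglongrightarrow> B * 0"
    using q by (intro tendsto_mult tendsto_const LIMSEQ_power_zero) auto
  then have "eventually (\<lambda>M. B * q ^ M < \<epsilon> / 2) sequentially"
    using \<epsilon> by (intro order_tendstoD(2)) auto
  then obtain M where M: "B * q ^ M < \<epsilon> / 2"
    unfolding eventually_sequentially by blast
  show ?thesis
    unfolding eventually_sequentially
  proof (intro exI allI impI)
    fix n assume n: "N + 2 * M \<le> n"
    have "0 \<le> \<epsilon> / 2"
      using \<epsilon> by simp
    with q(1) B rec N have "x (N + (n - N)) \<le> \<epsilon> / 2 + B * q ^ ((n - N) div 2)"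
      by (rule two_step_contraction_decay)
    moreover have "0 \<le> B"
      using B[of 0] by linarith
    then have "B * q ^ ((n - N) div 2) \<le> B * q ^ M"
      using n q by (intro mult_left_mono power_decreasing) auto
    ultimately show "x n \<le> \<epsilon>"
      using n M by simp
  qed
qed

text \<open>The constant L/K is the fixed point of the recursion, because (K - 1)^2 = K (K - 2) + 1.\<close>
lemma eventually_le_average_of_two_step_recursion:
  fixes u w :: "nat \<Rightarrow> real" and K :: nat
  assumes K: "3 \<le> K" and u: "decseq u" "u \<longlonglongrightarrow> L" and L: "0 \<le> L"
    and w: "\<And>n. 0 \<le> w n" "\<And>n. w n \<le> u n"
    and rec: "\<And>n. w (n + 2) \<le> ((real K - 2) * u n + w n) / (real K - 1)\<^sup>2"
    and \<epsilon>: "0 < \<epsilon>"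
  shows "eventually (\<lambda>n. w n \<le> L / K + \<epsilon>) sequentially"
proof -
  define d where "d = (real K - 1)\<^sup>2"
  have "(2::real)\<^sup>2 \<le> d"
    unfolding d_def using K by (intro power_mono) auto
  then have d: "d = real K * (real K - 2) + 1" "4 \<le> d"
    by (auto simp: d_def power2_eq_square algebra_simps)
  define \<delta> where "\<delta> n = (real K - 2) / d * (u n - L)" for n
  have "\<delta> \<longlonglongrightarrow> (real K - 2) / d * (L - L)"
    unfolding \<delta>_def by (intro tendsto_intros u)
  then have \<delta>0: "\<delta> \<longlonglongrightarrow> 0"
    by simp
  have "\<bar>w n - L / K\<bar> \<le> u 0 + L / K" for n
    using w[of n] decseqD[OF u(1), of 0 n] divide_nonneg_nonneg[OF L, of K]
    unfolding abs_le_iff by linarith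
  moreover have "w (n + 2) - L / K \<le> \<delta> n + 1 / d * (w n - L / K)" for n
  proof -
    have "(real K - 2) * L + L / K = L / K * d"
      using K unfolding d(1) by (simp add: field_simps)
    then have "L / K = ((real K - 2) * L + L / K) / d"
      using d(2) by simp
    moreover have "\<delta> n + 1 / d * (w n - L / K)
        = ((real K - 2) * u n + w n) / d - ((real K - 2) * L + L / K) / d"
      using d(2) by (simp add: \<delta>_def field_simps)
    ultimately show ?thesis
      using rec[of n] unfolding d_def[symmetric] by linarith
  qed
  ultimately have "eventually (\<lambda>n. w n - L / K \<le> \<epsilon>) sequentially"
    using d(2) \<epsilon>
    by (intro eventually_le_of_two_step_contraction[where q = "1 / d", OF _ _ \<delta>0]) simp_all
  then show ?thesis
    by (rule eventually_mono) simp
qed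

lemma tendsto_average_of_two_step_recursion:
  fixes u :: "nat \<Rightarrow> real" and w :: "nat \<Rightarrow> nat \<Rightarrow> real" and K :: nat
  assumes K: "3 \<le> K" and u: "decseq u" "u \<longlonglongrightarrow> L" "\<And>n. u n = (\<Sum>j<K. w j n)"
    and w: "\<And>j n. j < K \<Longrightarrow> 0 \<le> w j n"
    and rec: "\<And>j n. j < K \<Longrightarrow> w j (n + 2) \<le> ((real K - 2) * u n + w j n) / (real K - 1)\<^sup>2"
    and i: "i < K"
  shows "w i \<longlonglongrightarrow> L / K"
proof (rule tendstoI)
  fix \<epsilon> :: real assume \<epsilon>: "0 < \<epsilon>"
  have L_le: "L \<le> u n" for n
    using decseq_ge[OF u(1,2)] .
  have w_le: "w j n \<le> u n" if "j < K" for j n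
    unfolding u(3) using w that by (intro member_le_sum) auto
  have "0 \<le> L"
    using u(2) by (rule LIMSEQ_le_const) (auto simp: u(3) w intro!: sum_nonneg)
  then have "eventually (\<lambda>n. \<forall>j\<in>{..<K}. w j n \<le> L / K + \<epsilon> / K) sequentially"
    using K \<epsilon> w w_le rec
    by (intro eventually_ball_finite ballI eventually_le_average_of_two_step_recursion[OF K u(1,2)]) auto
  then show "eventually (\<lambda>n. dist (w i n) (L / K) < \<epsilon>) sequentially"
  proof (rule eventually_mono)
    fix n assume upper: "\<forall>j\<in>{..<K}. w j n \<le> L / K + \<epsilon> / K"
    have "w i n = u n - (\<Sum>j\<in>{..<K} - {i}. w j n)"
      using i by (simp add: u(3) sum_diff1)
    also have "\<dots> \<ge> L - (\<Sum>j\<in>{..<K} - {i}. L / K + \<epsilon> / K)"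
      using L_le upper by (intro diff_mono sum_mono) auto
    finally have "w i n \<ge> L / K - (real K - 1) * (\<epsilon> / K)"
      using i K by (simp add: field_simps)
    moreover have "(real K - 1) * (\<epsilon> / K) < \<epsilon>" "\<epsilon> / K < \<epsilon>"
      using \<epsilon> K by (simp_all add: field_simps)
    ultimately show "dist (w i n) (L / K) < \<epsilon>"
      using upper i unfolding dist_real_def abs_less_iff by force
  qed
qed

lemma involution_recursion_growth_bounds:
  fixes V :: "nat \<Rightarrow> nat \<Rightarrow> real" and \<sigma> :: "nat \<Rightarrow> nat" and K :: nat
  assumes \<sigma>: "\<And>i. i < K \<Longrightarrow> \<sigma> i < K" "\<And>i. i < K \<Longrightarrow> \<sigma> (\<sigma> i) = i"
    and rec: "\<And>i n. i < K \<Longrightarrow> V i (Suc n) \<le> (\<Sum>j\<in>{..<K} - {\<sigma> i}. V j n)"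
  shows "(\<Sum>j<K. V j (Suc n)) \<le> (real K - 1) * (\<Sum>j<K. V j n)"
    and "i < K \<Longrightarrow> V i (n + 2) \<le> (real K - 2) * (\<Sum>j<K. V j n) + V i n"
proof -
  define U where "U n = (\<Sum>j<K. V j n)" for n
  have reindex: "(\<Sum>j<K. f (\<sigma> j)) = (\<Sum>j<K. f j)" for f :: "nat \<Rightarrow> real"
    using \<sigma> by (intro sum.reindex_bij_witness[of _ \<sigma> \<sigma>]) auto
  have step: "V i (Suc n) \<le> U n - V (\<sigma> i) n" if "i < K" for i n
    using rec[OF that] \<sigma>(1)[OF that] by (simp add: U_def sum_diff1)
  have "U (Suc n) \<le> (\<Sum>i<K. U n - V (\<sigma> i) n)"
    unfolding U_def[of "Suc n"] by (intro sum_mono step) auto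
  also have "\<dots> = (real K - 1) * U n"
    by (simp add: sum_subtractf reindex[of "\<lambda>j. V j n"] U_def algebra_simps)
  finally show "(\<Sum>j<K. V j (Suc n)) \<le> (real K - 1) * (\<Sum>j<K. V j n)"
    by (simp add: U_def)
  show "V i (n + 2) \<le> (real K - 2) * (\<Sum>j<K. V j n) + V i n" if i: "i < K"
  proof -
    have "V i (n + 2) \<le> (\<Sum>j\<in>{..<K} - {\<sigma> i}. V j (Suc n))"
      using rec[OF i, of "Suc n"] by simp
    also have "\<dots> \<le> (\<Sum>j\<in>{..<K} - {\<sigma> i}. U n - V (\<sigma> j) n)"
      by (intro sum_mono step) auto
    also have "\<dots> = (\<Sum>j<K. U n - V (\<sigma> j) n) - (U n - V i n)"
      using \<sigma> i by (simp add: sum_diff1)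
    also have "\<dots> = (real K - 2) * U n + V i n"
      by (simp add: sum_subtractf reindex[of "\<lambda>j. V j n"] U_def algebra_simps)
    finally show ?thesis
      by (simp add: U_def)
  qed
qed

lemma ex_normalized_limit_of_involution_recursion:
  fixes V :: "nat \<Rightarrow> nat \<Rightarrow> real" and \<sigma> :: "nat \<Rightarrow> nat" and K :: nat
  assumes K: "3 \<le> K"
    and \<sigma>: "\<And>i. i < K \<Longrightarrow> \<sigma> i < K" "\<And>i. i < K \<Longrightarrow> \<sigma> (\<sigma> i) = i"
    and V: "\<And>i n. i < K \<Longrightarrow> 0 \<le> V i n"
    and rec: "\<And>i n. i < K \<Longrightarrow> V i (Suc n) \<le> (\<Sum>j\<in>{..<K} - {\<sigma> i}. V j n)"
  shows "\<exists>\<beta>. \<forall>i<K. (\<lambda>n. V i n / (real K - 1) ^ n) \<longlonglongrightarrow> \<beta>"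
proof -
  have sum_step: "(\<Sum>j<K. V j (Suc n)) \<le> (real K - 1) * (\<Sum>j<K. V j n)" for n
    using \<sigma> rec by (rule involution_recursion_growth_bounds(1))
  have two_step: "V i (n + 2) \<le> (real K - 2) * (\<Sum>j<K. V j n) + V i n" if "i < K" for i n
    using \<sigma> rec that by (rule involution_recursion_growth_bounds(2))
  define d where "d = real K - 1"
  have d: "2 \<le> d"
    using K by (simp add: d_def)
  define u where "u n = (\<Sum>j<K. V j n) / d ^ n" for n
  define w where "w i n = V i n / d ^ n" for i n
  have "decseq u"
  proof (rule decseq_SucI)
    fix n
    have "(\<Sum>j<K. V j (Suc n)) / d ^ Suc n \<le> d * (\<Sum>j<K. V j n) / d ^ Suc n"
      using sum_step[of n] d by (intro divide_right_mono) (auto simp: d_def)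
    then show "u (Suc n) \<le> u n"
      using d by (simp add: u_def)
  qed
  moreover have "0 \<le> u n" for n
    using V d unfolding u_def by (intro divide_nonneg_nonneg sum_nonneg) auto
  ultimately obtain L where L: "u \<longlonglongrightarrow> L"
    using decseq_convergent by blast
  have "w i \<longlonglongrightarrow> L / K" if "i < K" for i
  proof (rule tendsto_average_of_two_step_recursion[OF K \<open>decseq u\<close> L _ _ _ that])
    show "u n = (\<Sum>j<K. w j n)" for n
      by (simp add: u_def w_def sum_divide_distrib)
    show "0 \<le> w j n" if "j < K" for j n
      using V[OF that] d by (simp add: w_def)
    show "w j (n + 2) \<le> ((real K - 2) * u n + w j n) / (real K - 1)\<^sup>2" if "j < K" for j n
      using divide_right_mono[OF two_step[OF that, of n], of "d ^ (n + 2)"] d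
      by (simp add: w_def u_def d_def[symmetric] power_add power2_eq_square field_simps)
  qed
  then show ?thesis
    unfolding w_def d_def by blast
qed

lemma ex_normalized_limit_of_affine_involution_recursion:
  fixes s :: "nat \<Rightarrow> nat \<Rightarrow> real" and \<sigma> :: "nat \<Rightarrow> nat" and K :: nat
  assumes K: "3 \<le> K"
    and \<sigma>: "\<And>i. i < K \<Longrightarrow> \<sigma> i < K" "\<And>i. i < K \<Longrightarrow> \<sigma> (\<sigma> i) = i"
    and c: "0 \<le> c" and s: "\<And>i n. i < K \<Longrightarrow> 0 \<le> s i n"
    and rec: "\<And>i n. i < K \<Longrightarrow> s i (Suc n) \<le> c + (\<Sum>j\<in>{..<K} - {\<sigma> i}. s j n)"
  shows "\<exists>\<beta>. \<forall>i<K. (\<lambda>n. s i n / (real K - 1) ^ n) \<longlonglongrightarrow> \<beta>"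
proof -
  define c' where "c' = c / (real K - 2)"
  have c': "0 \<le> c'" "c + c' = (real K - 1) * c'"
    using K c by (auto simp: c'_def field_simps)
  have "\<exists>\<beta>. \<forall>i<K. (\<lambda>n. (s i n + c') / (real K - 1) ^ n) \<longlonglongrightarrow> \<beta>"
  proof (rule ex_normalized_limit_of_involution_recursion[OF K \<sigma>])
    show "0 \<le> s i n + c'" if "i < K" for i n
      using s[OF that] c' by simp
    show "s i (Suc n) + c' \<le> (\<Sum>j\<in>{..<K} - {\<sigma> i}. s j n + c')" if "i < K" for i n
      using rec[OF that, of n] \<sigma>(1)[OF that] c' K by (simp add: sum.distrib of_nat_diff)
  qed
  then obtain \<beta> where \<beta>: "\<And>i. i < K \<Longrightarrow> (\<lambda>n. (s i n + c') / (real K - 1) ^ n) \<longlonglongrightarrow> \<beta>"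
    by blast
  have "(\<lambda>n. c' * inverse ((real K - 1) ^ n)) \<longlonglongrightarrow> c' * 0"
    using K by (intro tendsto_mult tendsto_const LIMSEQ_inverse_realpow_zero) auto
  then have "(\<lambda>n. (s i n + c') / (real K - 1) ^ n - c' * inverse ((real K - 1) ^ n)) \<longlonglongrightarrow> \<beta> - 0"
    if "i < K" for i
    using \<beta>[OF that] by (intro tendsto_diff) simp_all
  then show ?thesis
    by (auto simp: divide_inverse distrib_right)
qed

lemma obtain_lower_envelope_tendsto_zero:
  fixes f :: "'i \<Rightarrow> nat \<Rightarrow> real"
  assumes "finite J" "\<And>j. j \<in> J \<Longrightarrow> f j \<longlonglongrightarrow> \<beta>"
  obtains \<delta> where "\<delta> \<longlonglongrightarrow> 0" "\<And>j n. j \<in> J \<Longrightarrow> \<beta> - \<delta> n \<le> f j n"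
proof
  show "(\<lambda>n. \<Sum>j\<in>J. \<bar>f j n - \<beta>\<bar>) \<longlonglongrightarrow> 0"
    using tendsto_sum[of J "\<lambda>j n. \<bar>f j n - \<beta>\<bar>" "\<lambda>_. 0"] assms
    by (simp add: tendsto_rabs_zero_iff LIM_zero_iff)
  show "\<beta> - (\<Sum>j\<in>J. \<bar>f j n - \<beta>\<bar>) \<le> f j n" if "j \<in> J" for j n
    using member_le_sum[of j J "\<lambda>j. \<bar>f j n - \<beta>\<bar>"] assms(1) that by auto
qed

lemma normalized_lower_bound_of_branch_pair:
  fixes s :: "nat \<Rightarrow> nat \<Rightarrow> real" and p :: "nat \<Rightarrow> real" and \<sigma> :: "nat \<Rightarrow> nat" and K :: nat
  assumes d: "0 < d" and \<sigma>: "\<And>i. i < K \<Longrightarrow> \<sigma> i < K"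
    and s_ge: "\<And>j m. j < K \<Longrightarrow> \<beta> - \<delta> m \<le> s j m / d ^ m"
    and i: "i < K" "i' < K" "\<sigma> i \<noteq> \<sigma> i'"
    and le: "s i (Suc n) + s i' (Suc n) \<le> 2 * c + p (Suc n) + (\<Sum>j\<in>{..<K} - {\<sigma> i, \<sigma> i'}. s j n)"
  shows "2 * d * (\<beta> - \<delta> (Suc n)) + 2 * (\<beta> - \<delta> n) - 2 * (c / d ^ n) - (\<Sum>j<K. s j n) / d ^ n
    \<le> p (Suc n) / d ^ n"
proof -
  have scaled: "d * (\<beta> - \<delta> (Suc n)) \<le> s j (Suc n) / d ^ n" if "j < K" for j
  proof -
    have "d * (\<beta> - \<delta> (Suc n)) \<le> d * (s j (Suc n) / d ^ Suc n)"
      using s_ge[OF that, of "Suc n"] d by (intro mult_left_mono) auto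
    also have "\<dots> = s j (Suc n) / d ^ n"
      using d by simp
    finally show ?thesis .
  qed
  have "{..<K} - {\<sigma> i, \<sigma> i'} = {..<K} - {\<sigma> i} - {\<sigma> i'}"
    by auto
  then have rest: "(\<Sum>j\<in>{..<K} - {\<sigma> i, \<sigma> i'}. s j n) / d ^ n
      = (\<Sum>j<K. s j n) / d ^ n - s (\<sigma> i) n / d ^ n - s (\<sigma> i') n / d ^ n"
    using \<sigma> i by (simp add: sum_diff1 diff_divide_distrib)
  have "s i (Suc n) / d ^ n + s i' (Suc n) / d ^ n
      \<le> (2 * c + p (Suc n) + (\<Sum>j\<in>{..<K} - {\<sigma> i, \<sigma> i'}. s j n)) / d ^ n"
    using le d by (simp add: divide_right_mono flip: add_divide_distrib)
  also have "\<dots> = 2 * (c / d ^ n) + p (Suc n) / d ^ n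
      + ((\<Sum>j<K. s j n) / d ^ n - s (\<sigma> i) n / d ^ n - s (\<sigma> i') n / d ^ n)"
    by (simp add: add_divide_distrib rest)
  finally show ?thesis
    using scaled[OF i(1)] scaled[OF i(2)] s_ge[OF \<sigma>[OF i(1)], of n] s_ge[OF \<sigma>[OF i(2)], of n]
    by argo
qed

lemma tendsto_normalized_of_branch_bounds:
  fixes s :: "nat \<Rightarrow> nat \<Rightarrow> real" and p :: "nat \<Rightarrow> real" and \<sigma> :: "nat \<Rightarrow> nat" and K :: nat
  assumes K: "3 \<le> K" and \<sigma>: "\<And>i. i < K \<Longrightarrow> \<sigma> i < K"
    and s: "\<And>i. i < K \<Longrightarrow> (\<lambda>n. s i n / (real K - 1) ^ n) \<longlonglongrightarrow> \<beta>"
    and upper: "\<And>n. p (Suc n) \<le> c + (\<Sum>j<K. s j n)"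
    and lower: "\<And>n. \<exists>i i'. i < K \<and> i' < K \<and> \<sigma> i \<noteq> \<sigma> i' \<and>
        s i (Suc n) + s i' (Suc n) \<le> 2 * c + p (Suc n) + (\<Sum>j\<in>{..<K} - {\<sigma> i, \<sigma> i'}. s j n)"
  shows "(\<lambda>n. p (Suc n) / (real K - 1) ^ n) \<longlonglongrightarrow> real K * \<beta>"
proof -
  define d where "d = real K - 1"
  have d: "2 \<le> d"
    using K by (simp add: d_def)
  have s': "(\<lambda>n. s j n / d ^ n) \<longlonglongrightarrow> \<beta>" if "j < K" for j
    using s[OF that] by (simp add: d_def)
  obtain \<delta> where \<delta>: "\<delta> \<longlonglongrightarrow> 0" and s_ge: "\<And>j n. j < K \<Longrightarrow> \<beta> - \<delta> n \<le> s j n / d ^ n"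
    by (rule obtain_lower_envelope_tendsto_zero[of "{..<K}" "\<lambda>j n. s j n / d ^ n" \<beta>]) (auto simp: s')
  have T: "(\<lambda>n. (\<Sum>j<K. s j n) / d ^ n) \<longlonglongrightarrow> real K * \<beta>"
    using tendsto_sum[of "{..<K}" "\<lambda>j n. s j n / d ^ n" "\<lambda>_. \<beta>"] s' by (simp add: sum_divide_distrib)
  have "(\<lambda>n. c * inverse (d ^ n)) \<longlonglongrightarrow> c * 0"
    using d by (intro tendsto_mult tendsto_const LIMSEQ_inverse_realpow_zero) auto
  then have c: "(\<lambda>n. c / d ^ n) \<longlonglongrightarrow> 0"
    by (simp add: divide_inverse)
  define lo where
    "lo n = 2 * d * (\<beta> - \<delta> (Suc n)) + 2 * (\<beta> - \<delta> n) - 2 * (c / d ^ n) - (\<Sum>j<K. s j n) / d ^ n" for n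
  have "lo \<longlonglongrightarrow> 2 * d * (\<beta> - 0) + 2 * (\<beta> - 0) - 2 * 0 - real K * \<beta>"
    unfolding lo_def
    by (intro tendsto_diff tendsto_add tendsto_mult_left tendsto_const \<delta> c T LIMSEQ_Suc[OF \<delta>])
  moreover have "2 * d * (\<beta> - 0) + 2 * (\<beta> - 0) - 2 * 0 - real K * \<beta> = real K * \<beta>"
    by (simp add: d_def algebra_simps)
  ultimately have lo_lim: "lo \<longlonglongrightarrow> real K * \<beta>"
    by (simp only:)
  have up_lim: "(\<lambda>n. c / d ^ n + (\<Sum>j<K. s j n) / d ^ n) \<longlonglongrightarrow> real K * \<beta>"
    using tendsto_add[OF c T] by simp
  have up: "p (Suc n) / d ^ n \<le> c / d ^ n + (\<Sum>j<K. s j n) / d ^ n" for n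
    using divide_right_mono[OF upper[of n], of "d ^ n"] d by (simp add: add_divide_distrib)
  have lo: "lo n \<le> p (Suc n) / d ^ n" for n
  proof -
    obtain i i' where i: "i < K" "i' < K" "\<sigma> i \<noteq> \<sigma> i'"
      and le: "s i (Suc n) + s i' (Suc n) \<le> 2 * c + p (Suc n) + (\<Sum>j\<in>{..<K} - {\<sigma> i, \<sigma> i'}. s j n)"
      using lower[of n] by blast
    have "0 < d"
      using d by simp
    then show ?thesis
      unfolding lo_def using \<sigma> s_ge i le by (rule normalized_lower_bound_of_branch_pair)
  qed
  have "(\<lambda>n. p (Suc n) / d ^ n) \<longlonglongrightarrow> real K * \<beta>"
    by (rule tendsto_sandwich[OF _ _ lo_lim up_lim]) (simp_all add: lo up)
  then show ?thesis
    by (simp add: d_def)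
qed

lemma real_branch_size:
  assumes "2 \<le> k"
  defines "d \<equiv> real (2 * k) - 1"
  shows "real (branch_size k n) = (d ^ Suc n - 1) / (d - 1)"
proof (induction n)
  case 0
  have "d \<noteq> 1"
    using assms by (simp add: d_def)
  then show ?case by simp
next
  case (Suc n)
  have "d - 1 \<noteq> 0" and "real (2 * k - 1) = d"
    using assms by (simp_all add: d_def of_nat_diff)
  with Suc show ?case
    by (simp add: field_simps)
qed

lemma tendsto_card_branch_normalized:
  assumes "2 \<le> k" "j < 2 * k"
  defines "d \<equiv> real (2 * k) - 1"
  shows "(\<lambda>n. real (card (branch k j n)) / d ^ n) \<longlonglongrightarrow> d / (d - 1)"
proof -
  have d: "3 \<le> d"
    using assms by (simp add: d_def)
  have "real (card (branch k j n)) / d ^ n = (d - inverse (d ^ n)) / (d - 1)" for n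
    using assms d by (simp add: card_branch real_branch_size field_simps)
  moreover have "(\<lambda>n. (d - inverse (d ^ n)) / (d - 1)) \<longlonglongrightarrow> (d - 0) / (d - 1)"
    using d by (intro tendsto_divide tendsto_diff tendsto_const LIMSEQ_inverse_realpow_zero) auto
  ultimately show ?thesis
    by simp
qed

lemma tendsto_card_Delta_Suc_normalized:
  assumes "2 \<le> k"
  defines "d \<equiv> real (2 * k) - 1"
  shows "(\<lambda>n. real (card (Delta k (Suc n))) / d ^ n) \<longlonglongrightarrow> real (2 * k) * (d / (d - 1))"
proof -
  have d: "3 \<le> d"
    using assms by (simp add: d_def)
  have "real (card (Delta k (Suc n))) / d ^ n
      = inverse (d ^ n) + real (2 * k) * (real (card (branch k 0 n)) / d ^ n)" for n
    using assms by (simp add: card_Delta_Suc card_branch divide_inverse distrib_right)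
  moreover have "(\<lambda>n. inverse (d ^ n) + real (2 * k) * (real (card (branch k 0 n)) / d ^ n))
      \<longlonglongrightarrow> 0 + real (2 * k) * (d / (d - 1))"
    using d assms tendsto_card_branch_normalized[of k 0]
    by (intro tendsto_add tendsto_mult_left LIMSEQ_inverse_realpow_zero) (auto simp: d_def)
  ultimately show ?thesis
    by simp
qed

lemma tendsto_divide_of_normalized:
  fixes a b c :: "nat \<Rightarrow> real"
  assumes "(\<lambda>n. a n / c n) \<longlonglongrightarrow> \<alpha>" "(\<lambda>n. b n / c n) \<longlonglongrightarrow> \<gamma>" "\<gamma> \<noteq> 0" "\<And>n. c n \<noteq> 0"
  shows "(\<lambda>n. a n / b n) \<longlonglongrightarrow> \<alpha> / \<gamma>"
proof -
  have "(\<lambda>n. (a n / c n) / (b n / c n)) \<longlonglongrightarrow> \<alpha> / \<gamma>"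
    using assms(1-3) by (rule tendsto_divide)
  then show ?thesis
    using assms(4) by simp
qed

lemma ln_le_ln_mult_prod:
  fixes N C :: nat and M :: "'b \<Rightarrow> nat"
  assumes "finite J" "0 < N" "\<And>j. j \<in> J \<Longrightarrow> 0 < M j" "N \<le> C * (\<Prod>j\<in>J. M j)"
  shows "ln (real N) \<le> ln (real C) + (\<Sum>j\<in>J. ln (real (M j)))"
proof -
  have "0 < C"
    using assms(2,4) by (cases "C = 0") auto
  have "ln (real N) \<le> ln (real C * (\<Prod>j\<in>J. real (M j)))"
    using assms(2,4) by (intro ln_mono) (simp_all flip: of_nat_prod of_nat_mult)
  also have "\<dots> = ln (real C) + (\<Sum>j\<in>J. ln (real (M j)))"
    using \<open>0 < C\<close> assms(1,3) by (simp add: ln_mult ln_prod prod_pos)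
  finally show ?thesis .
qed

lemma ex_ln_card_patterns_branch_pair_le:
  fixes A :: "nat \<Rightarrow> 'a::finite \<Rightarrow> 'a \<Rightarrow> bool"
  assumes k: "0 < k" and X: "X = markov_tree_shift k (AAt k A)" and card: "CARD('a) < 2 * k"
    and nonempty: "X \<noteq> {}"
  shows "\<exists>i i'. i < 2 * k \<and> i' < 2 * k \<and> ginv k i \<noteq> ginv k i' \<and>
    ln (card (patterns X (branch k i (Suc n)))) + ln (card (patterns X (branch k i' (Suc n))))
      \<le> 2 * ln CARD('a) + ln (card (patterns X (Delta k (Suc n))))
        + (\<Sum>j\<in>{..<2 * k} - {ginv k i, ginv k i'}. ln (card (patterns X (branch k j n))))"
proof -
  note pos = card_patterns_pos[OF nonempty]
  obtain i i' where i: "i < 2 * k" "i' < 2 * k" "ginv k i \<noteq> ginv k i'"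
    and le: "card (patterns X (branch k i (Suc n))) * card (patterns X (branch k i' (Suc n)))
      \<le> CARD('a)^2 * card (patterns X (Delta k (Suc n))) *
         (\<Prod>j\<in>{..<2 * k} - {ginv k i, ginv k i'}. card (patterns X (branch k j n)))"
    using ex_card_patterns_branch_pair_le[OF k X card] by blast
  have "ln (card (patterns X (branch k i (Suc n)))) + ln (card (patterns X (branch k i' (Suc n))))
      = ln (card (patterns X (branch k i (Suc n))) * card (patterns X (branch k i' (Suc n))))"
    by (simp add: ln_mult pos finite_branch)
  also have "\<dots> \<le> ln (CARD('a)^2 * card (patterns X (Delta k (Suc n))))
      + (\<Sum>j\<in>{..<2 * k} - {ginv k i, ginv k i'}. ln (card (patterns X (branch k j n))))"
    using le by (intro ln_le_ln_mult_prod) (auto simp: pos finite_branch)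
  also have "ln (CARD('a)^2 * card (patterns X (Delta k (Suc n))))
      = 2 * ln CARD('a) + ln (card (patterns X (Delta k (Suc n))))"
    by (simp add: ln_mult ln_realpow pos finite_Delta)
  finally show ?thesis
    using i by blast
qed

lemma ex_normalized_limits_of_ln_card_patterns:
  fixes A :: "nat \<Rightarrow> 'a::finite \<Rightarrow> 'a \<Rightarrow> bool"
  assumes k: "2 \<le> k" and card: "CARD('a) < 2 * k"
    and X: "X = markov_tree_shift k (AAt k A)" and nonempty: "X \<noteq> {}"
  defines "d \<equiv> real (2 * k) - 1"
  obtains \<beta> where
    "\<And>i. i < 2 * k \<Longrightarrow> (\<lambda>n. ln (card (patterns X (branch k i n))) / d ^ n) \<longlonglongrightarrow> \<beta>"
    "(\<lambda>n. ln (card (patterns X (Delta k (Suc n)))) / d ^ n) \<longlonglongrightarrow> real (2 * k) * \<beta>"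
proof -
  have k0: "0 < k"
    using k by simp
  note pos = card_patterns_pos[OF nonempty]
  define s where "s j n = ln (card (patterns X (branch k j n)))" for j n
  define p where "p n = ln (card (patterns X (Delta k n)))" for n
  define c where "c = ln CARD('a)"
  have rec: "s i (Suc n) \<le> c + (\<Sum>j\<in>{..<2 * k} - {ginv k i}. s j n)" if "i < 2 * k" for i n
    unfolding s_def c_def using card_patterns_branch_Suc_le[OF k0 X that]
    by (intro ln_le_ln_mult_prod) (auto simp: pos finite_branch)
  have upper: "p (Suc n) \<le> c + (\<Sum>j<2 * k. s j n)" for n
    unfolding s_def p_def c_def using card_patterns_Delta_Suc_le[of X k n]
    by (intro ln_le_ln_mult_prod) (auto simp: pos finite_branch finite_Delta)
  have lower: "\<exists>i i'. i < 2 * k \<and> i' < 2 * k \<and> ginv k i \<noteq> ginv k i' \<and>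
      s i (Suc n) + s i' (Suc n) \<le> 2 * c + p (Suc n) + (\<Sum>j\<in>{..<2 * k} - {ginv k i, ginv k i'}. s j n)" for n
    unfolding s_def p_def c_def by (rule ex_ln_card_patterns_branch_pair_le[OF k0 X card nonempty])
  have "0 \<le> s j n" for j n
    using pos[OF finite_branch] by (simp add: s_def Suc_le_eq)
  then have "\<exists>\<beta>. \<forall>i<2 * k. (\<lambda>n. s i n / (real (2 * k) - 1) ^ n) \<longlonglongrightarrow> \<beta>"
    using k0 k rec
    by (intro ex_normalized_limit_of_affine_involution_recursion[of "2 * k" "ginv k" c s])
      (auto simp: ginv_less ginv_ginv c_def)
  then obtain \<beta> where \<beta>: "\<And>i. i < 2 * k \<Longrightarrow> (\<lambda>n. s i n / (real (2 * k) - 1) ^ n) \<longlonglongrightarrow> \<beta>"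
    by blast
  moreover have "(\<lambda>n. p (Suc n) / (real (2 * k) - 1) ^ n) \<longlonglongrightarrow> real (2 * k) * \<beta>"
    using k k0 \<beta> upper lower
    by (intro tendsto_normalized_of_branch_bounds[of "2 * k" "ginv k"]) (auto simp: ginv_less)
  ultimately show thesis
    using that unfolding s_def p_def d_def by blast
qed

lemma ex_limit_ln_card_patterns_over_card:
  fixes A :: "nat \<Rightarrow> 'a::finite \<Rightarrow> 'a \<Rightarrow> bool"
  assumes k: "2 \<le> k" and "CARD('a) < 2 * k" and "X = markov_tree_shift k (AAt k A)"
  shows "\<exists>L. (\<lambda>n. ln (card (patterns X (Delta k n))) / card (Delta k n)) \<longlonglongrightarrow> L \<and>
    (\<forall>i<2 * k. (\<lambda>n. ln (card (patterns X (branch k i n))) / card (branch k i n)) \<longlonglongrightarrow> L)"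
proof (cases "X = {}")
  case True
  \<comment> \<open>all quotients vanish, as ln 0 = 0 in Isabelle\<close>
  then show ?thesis
    by (intro exI[of _ 0]) (simp add: patterns_def)
next
  case False
  define d where "d = real (2 * k) - 1"
  have d: "d / (d - 1) \<noteq> 0" "\<And>n. d ^ n \<noteq> 0" "real (2 * k) \<noteq> 0"
    using k by (simp_all add: d_def)
  obtain \<beta> where
    stems: "\<And>i. i < 2 * k \<Longrightarrow> (\<lambda>n. ln (card (patterns X (branch k i n))) / d ^ n) \<longlonglongrightarrow> \<beta>" and
    ball: "(\<lambda>n. ln (card (patterns X (Delta k (Suc n)))) / d ^ n) \<longlonglongrightarrow> real (2 * k) * \<beta>"
    using ex_normalized_limits_of_ln_card_patterns[OF assms False, folded d_def] by blast
  have "(\<lambda>n. ln (card (patterns X (Delta k (Suc n)))) / card (Delta k (Suc n)))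
      \<longlonglongrightarrow> real (2 * k) * \<beta> / (real (2 * k) * (d / (d - 1)))"
    using tendsto_card_Delta_Suc_normalized[OF k, folded d_def] d
    by (intro tendsto_divide_of_normalized[OF ball]) simp_all
  then have "(\<lambda>n. ln (card (patterns X (Delta k n))) / card (Delta k n)) \<longlonglongrightarrow> \<beta> / (d / (d - 1))"
    unfolding mult_divide_mult_cancel_left[OF d(3)] by (rule LIMSEQ_imp_Suc)
  moreover have "(\<lambda>n. ln (card (patterns X (branch k i n))) / card (branch k i n)) \<longlonglongrightarrow> \<beta> / (d / (d - 1))"
    if "i < 2 * k" for i
    using tendsto_card_branch_normalized[OF k that, folded d_def] d
    by (intro tendsto_divide_of_normalized[OF stems[OF that]]) simp_all
  ultimately show ?thesis
    by blast
qed

theorem proposition4p6: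
  fixes k :: nat and A :: "nat \<Rightarrow> 'a::finite \<Rightarrow> 'a \<Rightarrow> bool"
  assumes "k \<ge> 2"
    and "CARD('a) \<le> 2 * k - 1"
  defines "X \<equiv> markov_tree_shift k (AAt k A)"
  shows "\<exists>L. (\<lambda>n. ln (real (npat k X (Delta k n))) / real (card (Delta k n))) \<longlonglongrightarrow> L
           \<and> (\<forall>i<2 * k. ereal L = stem_entropy k X i)"
proof -
  have X: "X = markov_tree_shift k (AAt k A)"
    unfolding X_def ..
  then have npat: "npat k X H = card (patterns X H)" for H
    by (rule npat_eq_card_patterns)
  have "CARD('a) < 2 * k"
    using assms(1,2) by linarith
  then obtain L where ball: "(\<lambda>n. ln (card (patterns X (Delta k n))) / card (Delta k n)) \<longlonglongrightarrow> L"
    and stems: "\<And>i. i < 2 * k \<Longrightarrow> (\<lambda>n. ln (card (patterns X (branch k i n))) / card (branch k i n)) \<longlonglongrightarrow> L"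
    using ex_limit_ln_card_patterns_over_card[OF assms(1) _ X] by blast
  have "ereal L = stem_entropy k X i" if "i < 2 * k" for i
    unfolding stem_entropy_def using stems[OF that]
    by (intro lim_imp_Limsup[symmetric]) (auto simp: npat DeltaBar_singleton_eq_branch that intro: tendsto_ereal)
  with ball show ?thesis
    by (auto simp: npat)
qed

end
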